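(* Let $f:[0,\infty)\to[0,\infty)$ be a convex function, let $\nu\in(0,1)$ and $t\in[0,1)\cup(1,\infty)$. Then $$\min\left\{\frac{1-\nu}{\nu},\frac{\nu}{1-\nu}\right\}\mathfrak C_{f,\frac12}(t,1)\le \mathfrak C_{f,\nu}(t,1)\le \max\left\{\frac{1-\nu}{\nu},\frac{\nu}{1-\nu}\right\}\mathfrak C_{f,\frac12}(t,1),$$ where in particular $\mathfrak C_{f,\frac12}(t,1)=\frac{1}{1-t}\int_t^1 f(\lambda)\,d\lambda$.
   Context: For real numbers $x,y$ and $\mu\in[0,1]$, write $x\nabla_\mu y:=(1-\mu)x+\mu y$. For a function $f$ Riemann integrable on the segment between $a$ and $b$, and $\nu\in[0,1]$, define $$\mathfrak C_{f,\nu}(a,b):=(1-\nu)\int_0^1 f\big(a\nabla_{\nu\lambda}b\big)\,d\lambda+\nu\int_0^1 f\big(b\nabla_{(1-\nu)\lambda}a\big)\,d\lambda .$$ *)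

theory Defs
  imports "HOL-Analysis.Analysis"
begin

definition wam :: "real \<Rightarrow> real \<Rightarrow> real \<Rightarrow> real" where
  "wam x mu y = (1 - mu) * x + mu * y"

text \<open>The functional C_{f,nu}(a,b) (integrals taken as Henstock-Kurzweil integrals,
which agree with the Riemann integral for Riemann integrable integrands).\<close>
definition frakC :: "(real \<Rightarrow> real) \<Rightarrow> real \<Rightarrow> real \<Rightarrow> real \<Rightarrow> real" where
  "frakC f nu a b =
     (1 - nu) * integral {0..1} (\<lambda>l. f (wam a (nu * l) b))
     + nu * integral {0..1} (\<lambda>l. f (wam b ((1 - nu) * l) a))"

end

theory Submission
  imports Defs
begin

text \<open>With \<open>m = t \<nabla>\<^sub>\<nu> 1\<close>, the two integrals in \<open>\<frakC>\<^sub>f\<^sub>,\<^sub>\<nu>(t,1)\<close> are the mean values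
of \<open>f\<close> over the two pieces of the segment between \<open>t\<close> and \<open>1\<close> cut at \<open>m\<close>, of lengths
\<open>\<nu>|1-t|\<close> and \<open>(1-\<nu>)|1-t|\<close>. Hence \<open>\<frakC>\<^sub>f\<^sub>,\<^sub>\<nu>(t,1) |1-t| = (1-\<nu>)/\<nu> A + \<nu>/(1-\<nu>) B\<close>,
where \<open>A, B \<ge> 0\<close> are the integrals of \<open>f\<close> over the two pieces, whereas for \<open>\<nu> = 1/2\<close>
both weights are \<open>1\<close> and the right-hand side is \<open>A + B\<close>, the integral over the whole
segment. Convexity only serves to make \<open>f\<close> integrable.\<close>

lemma integral_affine_unit_interval:
  fixes f :: "real \<Rightarrow> real"
  assumes "p < q" "f integrable_on {p..q}"
  shows "integral {0..1} (\<lambda>l. f (p + l * (q - p))) = integral {p..q} f / (q - p)"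
proof -
  have "(f has_integral integral {p..q} f) (cbox p q)"
    using assms(2) by auto
  from has_integral_affinity'[OF this, of "q - p" p] assms(1)
  have "((\<lambda>x. f ((q - p) * x + p)) has_integral integral {p..q} f / (q - p)) {0..1}"
    by (simp add: divide_simps)
  then show ?thesis
    by (simp add: integral_unique algebra_simps)
qed

lemma integral_affine_unit_interval_reversed:
  fixes f :: "real \<Rightarrow> real"
  assumes "q < p" "f integrable_on {q..p}"
  shows "integral {0..1} (\<lambda>l. f (p + l * (q - p))) = integral {q..p} f / (p - q)"
  using integral_affine_unit_interval[of "-p" "-q" "\<lambda>x. f (-x)"] assms
  by (simp add: algebra_simps)

lemma convex_nonneg_integrable:
  fixes f :: "real \<Rightarrow> real"
  assumes convex: "convex_on {a..b} f" and nonneg: "\<And>x. x \<in> {a..b} \<Longrightarrow> f x \<ge> 0"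
  shows "f integrable_on {a..b}"
proof -
  have "continuous_on {a<..<b} f"
    by (rule convex_on_continuous) (auto intro: convex_on_subset[OF convex])
  then have measurable: "f \<in> borel_measurable (lebesgue_on {a<..<b})"
    by (rule continuous_imp_measurable_on_sets_lebesgue) auto
  define M where "M = max (f a) (f b)"
  have bounded: "\<bar>f x\<bar> \<le> M" if "x \<in> {a<..<b}" for x
    using convex_on_le_max[OF convex, of x] nonneg[of x] that unfolding M_def by auto
  have endpoints: "negligible (({a<..<b} - {a..b}) \<union> ({a..b} - {a<..<b}))"
    by (rule negligible_subset[of "{a, b}"]) auto
  have "(\<lambda>x. M) integrable_on {a<..<b}"
    using integrable_spike_set_eq[OF endpoints] by auto
  then have "f integrable_on {a<..<b}"
    by (intro measurable_bounded_by_integrable_imp_integrable_real[OF measurable _ bounded]) auto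
  then show ?thesis
    using integrable_spike_set_eq[OF endpoints] by auto
qed

lemma wam_strictly_between:
  assumes "a < b" "0 < mu" "mu < 1"
  shows "a < wam a mu b" "wam a mu b < b"
proof -
  have "0 < mu * (b - a)" "0 < (1 - mu) * (b - a)"
    using assms by simp_all
  then show "a < wam a mu b" "wam a mu b < b"
    unfolding wam_def by (simp_all add: algebra_simps)
qed

lemma frakC_swap: "frakC f nu b a = frakC f (1 - nu) a b"
  unfolding frakC_def by (simp add: algebra_simps)

lemma frakC_split:
  fixes f :: "real \<Rightarrow> real"
  assumes "a < b" "0 < nu" "nu < 1" and integrable: "f integrable_on {a..b}"
  defines "m \<equiv> wam a nu b"
  shows "frakC f nu a b
    = ((1 - nu) / nu * integral {a..m} f + nu / (1 - nu) * integral {m..b} f) / (b - a)"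
proof -
  have left: "m - a = nu * (b - a)" and right: "b - m = (1 - nu) * (b - a)"
    unfolding m_def wam_def by algebra+
  have "a < m" "m < b"
    unfolding m_def using wam_strictly_between[OF assms(1-3)] .
  then have "f integrable_on {a..m}" "f integrable_on {m..b}"
    using integrable_on_subinterval[OF integrable] by auto
  then have "integral {0..1} (\<lambda>l. f (wam a (nu * l) b)) = integral {a..m} f / (m - a)"
    and "integral {0..1} (\<lambda>l. f (wam b ((1 - nu) * l) a)) = integral {m..b} f / (b - m)"
    using integral_affine_unit_interval[of a m f] integral_affine_unit_interval_reversed[of m b f]
      \<open>a < m\<close> \<open>m < b\<close> left right
    by (simp_all add: m_def wam_def algebra_simps)
  then have "frakC f nu a b
      = (1 - nu) * (integral {a..m} f / (nu * (b - a))) + nu * (integral {m..b} f / ((1 - nu) * (b - a)))"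
    unfolding frakC_def left right by simp
  also have "\<dots> = ((1 - nu) / nu * integral {a..m} f + nu / (1 - nu) * integral {m..b} f) / (b - a)"
  proof -
    obtain D where "D = b - a" "D > 0"
      using assms(1) by simp
    then show ?thesis
      using assms(2,3) by (simp add: field_simps flip: \<open>D = b - a\<close>)
  qed
  finally show ?thesis .
qed

lemma frakC_half:
  fixes f :: "real \<Rightarrow> real"
  assumes "a < b" "f integrable_on {a..b}"
  shows "frakC f (1/2) a b = integral {a..b} f / (b - a)"
proof -
  have "a \<le> wam a (1/2) b" "wam a (1/2) b \<le> b"
    using wam_strictly_between[OF assms(1), of "1/2"] by simp_all
  then show ?thesis
    using frakC_split[of a b "1/2" f] Henstock_Kurzweil_Integration.integral_combine[OF _ _ assms(2)] assms
    by simp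
qed

lemma weighted_sum_between_min_max:
  fixes x y A B :: real
  assumes "A \<ge> 0" "B \<ge> 0"
  shows "min x y * (A + B) \<le> x * A + y * B" "x * A + y * B \<le> max x y * (A + B)"
proof -
  have "min x y * A \<le> x * A" "min x y * B \<le> y * B" "x * A \<le> max x y * A" "y * B \<le> max x y * B"
    by (rule mult_right_mono; use assms in simp)+
  then show "min x y * (A + B) \<le> x * A + y * B" "x * A + y * B \<le> max x y * (A + B)"
    by (simp_all add: algebra_simps)
qed

lemma frakC_between_half_bounds:
  fixes f :: "real \<Rightarrow> real"
  assumes "a < b" "0 < nu" "nu < 1"
    and integrable: "f integrable_on {a..b}" and nonneg: "\<And>x. x \<in> {a..b} \<Longrightarrow> f x \<ge> 0"
  shows "min ((1 - nu) / nu) (nu / (1 - nu)) * frakC f (1/2) a b \<le> frakC f nu a b"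
    and "frakC f nu a b \<le> max ((1 - nu) / nu) (nu / (1 - nu)) * frakC f (1/2) a b"
proof -
  define m where "m = wam a nu b"
  have "a \<le> m" "m \<le> b"
    using wam_strictly_between[OF assms(1-3)] unfolding m_def by simp_all
  then have "f integrable_on {a..m}" "f integrable_on {m..b}"
    using integrable_on_subinterval[OF integrable] by auto
  then have "integral {a..m} f \<ge> 0" "integral {m..b} f \<ge> 0"
    using integral_nonneg nonneg \<open>a \<le> m\<close> \<open>m \<le> b\<close> by (metis atLeastAtMost_iff order.trans)+
  note bounds = weighted_sum_between_min_max[OF this, of "(1 - nu) / nu" "nu / (1 - nu)"]
  have "integral {a..m} f + integral {m..b} f = integral {a..b} f"
    using Henstock_Kurzweil_Integration.integral_combine[OF \<open>a \<le> m\<close> \<open>m \<le> b\<close> integrable] .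
  have "frakC f (1/2) a b = (integral {a..m} f + integral {m..b} f) / (b - a)"
    using frakC_half[OF assms(1) integrable] \<open>_ + _ = integral {a..b} f\<close> by simp
  then show "min ((1 - nu) / nu) (nu / (1 - nu)) * frakC f (1/2) a b \<le> frakC f nu a b"
    and "frakC f nu a b \<le> max ((1 - nu) / nu) (nu / (1 - nu)) * frakC f (1/2) a b"
    using frakC_split[OF assms(1-3) integrable] bounds assms(1)
    by (simp_all add: m_def divide_right_mono)
qed

theorem theorem2p3:
  fixes f :: "real \<Rightarrow> real" and nu t :: real
  assumes "convex_on {0..} f"
    and "\<And>x. x \<ge> 0 \<Longrightarrow> f x \<ge> 0"
    and "0 < nu" and "nu < 1"
    and "0 \<le> t" and "t \<noteq> 1"
  shows "min ((1 - nu) / nu) (nu / (1 - nu)) * frakC f (1/2) t 1 \<le> frakC f nu t 1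
       \<and> frakC f nu t 1 \<le> max ((1 - nu) / nu) (nu / (1 - nu)) * frakC f (1/2) t 1
       \<and> frakC f (1/2) t 1 =
           (if t < 1 then integral {t..1} f / (1 - t) else integral {1..t} f / (t - 1))"
proof -
  have integrable: "f integrable_on {a..b}" and nonneg: "\<And>x. x \<in> {a..b} \<Longrightarrow> f x \<ge> 0"
    if "0 \<le> a" for a b
  proof -
    show nonneg: "\<And>x. x \<in> {a..b} \<Longrightarrow> f x \<ge> 0"
      using assms(2) that by simp
    have "convex_on {a..b} f"
      using convex_on_subset[OF assms(1)] that by auto
    then show "f integrable_on {a..b}"
      using convex_nonneg_integrable nonneg by blast
  qed
  show ?thesis
  proof (cases "t < 1")
    case True
    note integrable_t1 = integrable[of t 1] and nonneg_t1 = nonneg[of t _ 1]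
    show ?thesis
      using frakC_between_half_bounds[OF True assms(3,4) integrable_t1 nonneg_t1]
        frakC_half[OF True integrable_t1] True assms(5) by simp
  next
    case False
    then have "1 < t"
      using assms(6) by simp
    moreover have "0 < 1 - nu" "1 - nu < 1"
      using assms(3,4) by simp_all
    moreover note integrable_1t = integrable[of 1 t] and nonneg_1t = nonneg[of 1 _ t]
    ultimately have "min (nu / (1 - nu)) ((1 - nu) / nu) * frakC f (1/2) 1 t \<le> frakC f (1 - nu) 1 t"
      and "frakC f (1 - nu) 1 t \<le> max (nu / (1 - nu)) ((1 - nu) / nu) * frakC f (1/2) 1 t"
      using frakC_between_half_bounds[of 1 t "1 - nu" f] by simp_all
    then show ?thesis
      using frakC_swap[of f nu t 1] frakC_swap[of f "1/2" t 1] frakC_half[OF \<open>1 < t\<close> integrable_1t] False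
      by (simp add: min.commute max.commute)
  qed
qed

end
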